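(* For any $n$-qubit pure state $\ket{\psi}$, $\Lambda_{\max}(\ket{\psi})\le\sqrt{1-\frac{\mathcal{C}(\ket{\psi})^2}{2}}$, and hence $E_g(\ket{\psi})\ge\frac{\mathcal{C}(\ket{\psi})^2}{2}$.
   Context: $\Lambda_{\max}(\ket{\psi})=\max|\langle\phi|\psi\rangle|$, the maximum over fully product states $\ket{\phi}=\bigotimes_{i=1}^n\ket{a_i}$ of single-qubit pure states; the geometric measure of entanglement is $E_g(\ket{\psi})=1-\Lambda_{\max}(\ket{\psi})^2$. $\mathcal{C}(\ket{\psi})=1-\frac{1}{2^{n}}\sum_{\alpha\subseteq [n]}\mathrm{Tr}[\rho_\alpha^2]$, with $\rho_\alpha$ the reduced state on $\alpha$ and $\mathrm{Tr}[\rho_\emptyset^2]=1$. *)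

theory Defs
  imports "HOL-Analysis.Analysis"
begin

text \<open>An n-qubit state is a function from computational basis labels to amplitudes.
  A basis label is a subset S of {0..<n}: the set of qubits in state |1>.
  Only the values on Pow {0..<n} matter.\<close>

type_synonym qstate = "nat set \<Rightarrow> complex"

definition normalized :: "nat \<Rightarrow> qstate \<Rightarrow> bool" where
  "normalized n \<psi> \<longleftrightarrow> (\<Sum>S\<in>Pow {0..<n}. (cmod (\<psi> S))\<^sup>2) = 1"

definition product_amp :: "nat \<Rightarrow> (nat \<Rightarrow> complex) \<Rightarrow> (nat \<Rightarrow> complex) \<Rightarrow> qstate" where
  "product_amp n a0 a1 S = (\<Prod>i\<in>{0..<n}. if i \<in> S then a1 i else a0 i)"

definition inner_q :: "nat \<Rightarrow> qstate \<Rightarrow> qstate \<Rightarrow> complex" where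
  "inner_q n \<phi> \<psi> = (\<Sum>S\<in>Pow {0..<n}. cnj (\<phi> S) * \<psi> S)"

definition Lambda_max :: "nat \<Rightarrow> qstate \<Rightarrow> real" where
  "Lambda_max n \<psi> = Sup {cmod (inner_q n (product_amp n a0 a1) \<psi>) | a0 a1.
      \<forall>i<n. (cmod (a0 i))\<^sup>2 + (cmod (a1 i))\<^sup>2 = 1}"

definition geom_ent :: "nat \<Rightarrow> qstate \<Rightarrow> real" where
  "geom_ent n \<psi> = 1 - (Lambda_max n \<psi>)\<^sup>2"

text \<open>Reduced density matrix on subsystem alpha, entries indexed by x, x' \<subseteq> alpha.\<close>
definition reduced :: "nat \<Rightarrow> qstate \<Rightarrow> nat set \<Rightarrow> nat set \<Rightarrow> nat set \<Rightarrow> complex" where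
  "reduced n \<psi> \<alpha> x x' = (\<Sum>y\<in>Pow ({0..<n} - \<alpha>). \<psi> (x \<union> y) * cnj (\<psi> (x' \<union> y)))"

definition purity :: "nat \<Rightarrow> qstate \<Rightarrow> nat set \<Rightarrow> real" where
  "purity n \<psi> \<alpha> = (if \<alpha> = {} then 1 else
     Re (\<Sum>x\<in>Pow \<alpha>. \<Sum>x'\<in>Pow \<alpha>. reduced n \<psi> \<alpha> x x' * reduced n \<psi> \<alpha> x' x))"

definition concentratable :: "nat \<Rightarrow> qstate \<Rightarrow> real" where
  "concentratable n \<psi> = 1 - (1 / 2 ^ n) * (\<Sum>\<alpha>\<in>Pow {0..<n}. purity n \<psi> \<alpha>)"

end

theory Submission
  imports Defs
begin

(* Split the qubits into a subsystem \<alpha> and its complement and write a product state as u \<otimes> v.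
  Cauchy-Schwarz over the complement gives |<u \<otimes> v|\<psi>>|\<^sup>2 \<le> <u|\<rho>\<^sub>\<alpha>|u>, and Cauchy-Schwarz
  over the matrix entries gives <u|\<rho>\<^sub>\<alpha>|u>\<^sup>2 \<le> Tr \<rho>\<^sub>\<alpha>\<^sup>2 \<le> 1.  So every purity lies between
  \<Lambda>\<^sup>4 and 1, and averaging over all \<alpha> gives 0 \<le> C \<le> 1 - \<Lambda>\<^sup>4.  Finally
  (1 - s\<^sup>4)\<^sup>2 \<le> 2 (1 - s\<^sup>2) for 0 \<le> s \<le> 1, whence \<Lambda>\<^sup>2 \<le> 1 - C\<^sup>2/2. *)

lemma sum_Pow_Un_disjoint:
  fixes f :: "'a set \<Rightarrow> 'b::comm_monoid_add"
  assumes "A \<inter> B = {}"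
  shows "(\<Sum>S\<in>Pow (A \<union> B). f S) = (\<Sum>x\<in>Pow A. \<Sum>y\<in>Pow B. f (x \<union> y))"
proof -
  have "(\<Sum>S\<in>Pow (A \<union> B). f S) = (\<Sum>(x, y)\<in>Pow A \<times> Pow B. f (x \<union> y))"
    using assms
    by (intro sum.reindex_bij_witness[where i = "\<lambda>(x, y). x \<union> y" and j = "\<lambda>S. (S \<inter> A, S \<inter> B)"])
      (auto simp flip: Int_Un_distrib simp: Int_absorb2)
  then show ?thesis
    by (simp add: sum.cartesian_product)
qed

lemma sum_Pow_prod_if:
  fixes f g :: "'a \<Rightarrow> 'c::comm_semiring_1"
  assumes "finite A"
  shows "(\<Sum>X\<in>Pow A. \<Prod>i\<in>A. if i \<in> X then f i else g i) = (\<Prod>i\<in>A. f i + g i)"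
proof -
  have "(\<Prod>i\<in>A. if i \<in> X then f i else g i) = (\<Prod>i\<in>X. f i) * (\<Prod>i\<in>A - X. g i)"
    if "X \<in> Pow A" for X
    using that prod.If_cases[OF assms, of "\<lambda>i. i \<in> X" f g] by (simp add: Int_absorb1 Diff_eq)
  then show ?thesis
    by (simp add: prod_add[OF assms])
qed

lemma Cauchy_Schwarz_ineq_sum_sum:
  fixes a b :: "'a \<Rightarrow> 'b \<Rightarrow> real"
  shows "(\<Sum>x\<in>I. \<Sum>y\<in>J. a x y * b x y)\<^sup>2
    \<le> (\<Sum>x\<in>I. \<Sum>y\<in>J. (a x y)\<^sup>2) * (\<Sum>x\<in>I. \<Sum>y\<in>J. (b x y)\<^sup>2)"
  using Cauchy_Schwarz_ineq_sum[of "\<lambda>p. a (fst p) (snd p)" "\<lambda>p. b (fst p) (snd p)" "I \<times> J"]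
  by (simp add: sum.cartesian_product case_prod_beta)

lemma cmod_sum_mult_cnj_sq_le:
  fixes f g :: "'a \<Rightarrow> complex"
  shows "(cmod (\<Sum>y\<in>Y. f y * cnj (g y)))\<^sup>2 \<le> (\<Sum>y\<in>Y. (cmod (f y))\<^sup>2) * (\<Sum>y\<in>Y. (cmod (g y))\<^sup>2)"
proof -
  have "cmod (\<Sum>y\<in>Y. f y * cnj (g y)) \<le> (\<Sum>y\<in>Y. cmod (f y) * cmod (g y))"
    by (rule order.trans[OF norm_sum]) (simp add: norm_mult)
  then have "(cmod (\<Sum>y\<in>Y. f y * cnj (g y)))\<^sup>2 \<le> (\<Sum>y\<in>Y. cmod (f y) * cmod (g y))\<^sup>2"
    by (intro power_mono) auto
  also have "\<dots> \<le> (\<Sum>y\<in>Y. (cmod (f y))\<^sup>2) * (\<Sum>y\<in>Y. (cmod (g y))\<^sup>2)"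
    by (rule Cauchy_Schwarz_ineq_sum)
  finally show ?thesis .
qed

lemma cmod_quadratic_form_sq_le:
  fixes u :: "'a \<Rightarrow> complex" and M :: "'a \<Rightarrow> 'a \<Rightarrow> complex"
  shows "(cmod (\<Sum>x\<in>I. \<Sum>x'\<in>I. cnj (u x) * u x' * M x x'))\<^sup>2
    \<le> (\<Sum>x\<in>I. (cmod (u x))\<^sup>2)\<^sup>2 * (\<Sum>x\<in>I. \<Sum>x'\<in>I. (cmod (M x x'))\<^sup>2)"
proof -
  have "cmod (\<Sum>x\<in>I. \<Sum>x'\<in>I. cnj (u x) * u x' * M x x')
      \<le> (\<Sum>x\<in>I. \<Sum>x'\<in>I. (cmod (u x) * cmod (u x')) * cmod (M x x'))"
    by (intro order.trans[OF norm_sum] sum_mono order.trans[OF norm_sum]) (simp add: norm_mult)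
  then have "(cmod (\<Sum>x\<in>I. \<Sum>x'\<in>I. cnj (u x) * u x' * M x x'))\<^sup>2
      \<le> (\<Sum>x\<in>I. \<Sum>x'\<in>I. (cmod (u x) * cmod (u x')) * cmod (M x x'))\<^sup>2"
    by (intro power_mono) auto
  also have "\<dots> \<le> (\<Sum>x\<in>I. \<Sum>x'\<in>I. (cmod (u x) * cmod (u x'))\<^sup>2) * (\<Sum>x\<in>I. \<Sum>x'\<in>I. (cmod (M x x'))\<^sup>2)"
    by (rule Cauchy_Schwarz_ineq_sum_sum)
  also have "(\<Sum>x\<in>I. \<Sum>x'\<in>I. (cmod (u x) * cmod (u x'))\<^sup>2) = (\<Sum>x\<in>I. (cmod (u x))\<^sup>2)\<^sup>2"
    by (simp add: power2_eq_square[of "sum _ _"] sum_product power_mult_distrib)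
  finally show ?thesis .
qed

lemma one_minus_sq_sq_le:
  fixes s :: real
  assumes "0 \<le> s" "s \<le> 1"
  shows "(1 - s\<^sup>2)\<^sup>2 \<le> 2 * (1 - s)"
proof -
  have "(1 - s) * (1 + s)\<^sup>2 = (1 - s\<^sup>2) * (1 + s)"
    by (simp add: power2_eq_square algebra_simps)
  also have "\<dots> \<le> 1 * 2"
    using assms by (intro mult_mono) (auto simp: power2_eq_square)
  finally have "(1 - s) * ((1 - s) * (1 + s)\<^sup>2) \<le> (1 - s) * 2"
    using assms by (intro mult_left_mono) auto
  then show ?thesis
    by (simp add: power2_eq_square algebra_simps)
qed

definition product_amp_on :: "nat set \<Rightarrow> (nat \<Rightarrow> complex) \<Rightarrow> (nat \<Rightarrow> complex) \<Rightarrow> qstate" where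
  "product_amp_on A a0 a1 X = (\<Prod>i\<in>A. if i \<in> X then a1 i else a0 i)"

lemma product_amp_eq_product_amp_on: "product_amp n = product_amp_on {0..<n}"
  by (simp add: fun_eq_iff product_amp_def product_amp_on_def)

lemma product_amp_on_Un:
  assumes "finite A" "finite B" "A \<inter> B = {}" "x \<subseteq> A" "y \<subseteq> B"
  shows "product_amp_on (A \<union> B) a0 a1 (x \<union> y) = product_amp_on A a0 a1 x * product_amp_on B a0 a1 y"
proof -
  have "product_amp_on (A \<union> B) a0 a1 (x \<union> y)
      = (\<Prod>i\<in>A. if i \<in> x \<union> y then a1 i else a0 i) * (\<Prod>i\<in>B. if i \<in> x \<union> y then a1 i else a0 i)"
    unfolding product_amp_on_def by (rule prod.union_disjoint[OF assms(1-3)])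
  also have "\<dots> = product_amp_on A a0 a1 x * product_amp_on B a0 a1 y"
    unfolding product_amp_on_def using assms(3-5) by (intro arg_cong2[where f = "(*)"] prod.cong) auto
  finally show ?thesis .
qed

lemma sum_Pow_cmod_sq_product_amp_on:
  assumes "finite A"
  shows "(\<Sum>X\<in>Pow A. (cmod (product_amp_on A a0 a1 X))\<^sup>2) = (\<Prod>i\<in>A. (cmod (a0 i))\<^sup>2 + (cmod (a1 i))\<^sup>2)"
proof -
  have "(cmod (product_amp_on A a0 a1 X))\<^sup>2 = (\<Prod>i\<in>A. if i \<in> X then (cmod (a1 i))\<^sup>2 else (cmod (a0 i))\<^sup>2)" for X
    unfolding product_amp_on_def prod_norm[symmetric] prod_power_distrib by (intro prod.cong) auto
  then show ?thesis
    by (simp add: sum_Pow_prod_if[OF assms] add.commute)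
qed

lemma reduced_swap: "reduced n \<psi> \<alpha> x' x = cnj (reduced n \<psi> \<alpha> x x')"
  by (simp add: reduced_def mult.commute)

lemma reduced_diag: "reduced n \<psi> \<alpha> x x = of_real (\<Sum>y\<in>Pow ({0..<n} - \<alpha>). (cmod (\<psi> (x \<union> y)))\<^sup>2)"
  by (simp add: reduced_def complex_norm_square del: of_real_power)

lemma sum_Re_reduced_diag_eq_1:
  assumes "normalized n \<psi>" "\<alpha> \<subseteq> {0..<n}"
  shows "(\<Sum>x\<in>Pow \<alpha>. Re (reduced n \<psi> \<alpha> x x)) = 1"
proof -
  have split: "Pow {0..<n} = Pow (\<alpha> \<union> ({0..<n} - \<alpha>))"
    using assms(2) by auto
  have "(\<Sum>S\<in>Pow {0..<n}. (cmod (\<psi> S))\<^sup>2)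
      = (\<Sum>x\<in>Pow \<alpha>. \<Sum>y\<in>Pow ({0..<n} - \<alpha>). (cmod (\<psi> (x \<union> y)))\<^sup>2)"
    unfolding split by (rule sum_Pow_Un_disjoint) blast
  then show ?thesis
    using assms(1) by (simp add: reduced_diag normalized_def)
qed

lemma cmod_sq_reduced_le:
  "(cmod (reduced n \<psi> \<alpha> x x'))\<^sup>2 \<le> Re (reduced n \<psi> \<alpha> x x) * Re (reduced n \<psi> \<alpha> x' x')"
  unfolding reduced_diag Re_complex_of_real unfolding reduced_def
  by (rule cmod_sum_mult_cnj_sq_le)

lemma purity_eq_sum_cmod_sq_reduced:
  assumes "normalized n \<psi>"
  shows "purity n \<psi> \<alpha> = (\<Sum>x\<in>Pow \<alpha>. \<Sum>x'\<in>Pow \<alpha>. (cmod (reduced n \<psi> \<alpha> x x'))\<^sup>2)"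
proof (cases "\<alpha> = {}")
  case True
  (* The definition sets the purity of the empty subsystem to 1; the formula gives \<parallel>\<psi>\<parallel>\<^sup>4. *)
  then show ?thesis
    using assms by (simp add: purity_def reduced_diag normalized_def)
next
  case False
  have "reduced n \<psi> \<alpha> x x' * reduced n \<psi> \<alpha> x' x = of_real ((cmod (reduced n \<psi> \<alpha> x x'))\<^sup>2)" for x x'
    unfolding reduced_swap[where x = x and x' = x'] by (rule complex_norm_square[symmetric])
  with False show ?thesis
    by (simp add: purity_def Re_sum)
qed

lemma purity_le_one:
  assumes "normalized n \<psi>" "\<alpha> \<subseteq> {0..<n}"
  shows "purity n \<psi> \<alpha> \<le> 1"
proof -
  have "purity n \<psi> \<alpha> \<le> (\<Sum>x\<in>Pow \<alpha>. \<Sum>x'\<in>Pow \<alpha>. Re (reduced n \<psi> \<alpha> x x) * Re (reduced n \<psi> \<alpha> x' x'))"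
    unfolding purity_eq_sum_cmod_sq_reduced[OF assms(1)] by (intro sum_mono cmod_sq_reduced_le)
  also have "\<dots> = 1"
    unfolding sum_product[symmetric] sum_Re_reduced_diag_eq_1[OF assms] by simp
  finally show ?thesis .
qed

lemma cmod_sq_partial_overlap_le:
  assumes "(\<Sum>y\<in>Pow ({0..<n} - \<alpha>). (cmod (v y))\<^sup>2) = 1"
  shows "(cmod (\<Sum>x\<in>Pow \<alpha>. \<Sum>y\<in>Pow ({0..<n} - \<alpha>). cnj (u x * v y) * \<psi> (x \<union> y)))\<^sup>2
    \<le> Re (\<Sum>x\<in>Pow \<alpha>. \<Sum>x'\<in>Pow \<alpha>. cnj (u x) * u x' * reduced n \<psi> \<alpha> x x')"
proof -
  define B where "B = {0..<n} - \<alpha>"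
  define w where "w y = (\<Sum>x\<in>Pow \<alpha>. cnj (u x) * \<psi> (x \<union> y))" for y
  have "(\<Sum>x\<in>Pow \<alpha>. \<Sum>y\<in>Pow B. cnj (u x * v y) * \<psi> (x \<union> y)) = (\<Sum>y\<in>Pow B. w y * cnj (v y))"
    unfolding w_def sum_distrib_right by (subst sum.swap) (simp add: mult_ac)
  then have "(cmod (\<Sum>x\<in>Pow \<alpha>. \<Sum>y\<in>Pow B. cnj (u x * v y) * \<psi> (x \<union> y)))\<^sup>2
      \<le> (\<Sum>y\<in>Pow B. (cmod (w y))\<^sup>2)"
    using cmod_sum_mult_cnj_sq_le[of w v "Pow B"] assms by (simp add: B_def)
  also have "\<dots> = Re (\<Sum>y\<in>Pow B. w y * cnj (w y))"
    by (simp add: Re_sum complex_norm_square[symmetric] del: of_real_power)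
  also have "(\<Sum>y\<in>Pow B. w y * cnj (w y))
      = (\<Sum>y\<in>Pow B. \<Sum>x\<in>Pow \<alpha>. \<Sum>x'\<in>Pow \<alpha>. cnj (u x) * u x' * (\<psi> (x \<union> y) * cnj (\<psi> (x' \<union> y))))"
    unfolding w_def cnj_sum sum_product by (simp add: mult_ac)
  also have "\<dots> = (\<Sum>x\<in>Pow \<alpha>. \<Sum>x'\<in>Pow \<alpha>. \<Sum>y\<in>Pow B. cnj (u x) * u x' * (\<psi> (x \<union> y) * cnj (\<psi> (x' \<union> y))))"
    by (subst sum.swap) (rule sum.cong[OF refl], rule sum.swap)
  also have "\<dots> = (\<Sum>x\<in>Pow \<alpha>. \<Sum>x'\<in>Pow \<alpha>. cnj (u x) * u x' * reduced n \<psi> \<alpha> x x')"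
    by (simp add: reduced_def B_def sum_distrib_left)
  finally show ?thesis
    by (simp add: B_def)
qed

lemma inner_product_amp_split:
  assumes "\<alpha> \<subseteq> {0..<n}"
  shows "inner_q n (product_amp n a0 a1) \<psi>
    = (\<Sum>x\<in>Pow \<alpha>. \<Sum>y\<in>Pow ({0..<n} - \<alpha>).
        cnj (product_amp_on \<alpha> a0 a1 x * product_amp_on ({0..<n} - \<alpha>) a0 a1 y) * \<psi> (x \<union> y))"
proof -
  define B where "B = {0..<n} - \<alpha>"
  have split: "{0..<n} = \<alpha> \<union> B" and disj: "\<alpha> \<inter> B = {}"
    using assms by (auto simp: B_def)
  have fin: "finite \<alpha>" "finite B"
    using assms finite_subset by (auto simp: B_def)
  have "inner_q n (product_amp n a0 a1) \<psi>
      = (\<Sum>x\<in>Pow \<alpha>. \<Sum>y\<in>Pow B. cnj (product_amp_on (\<alpha> \<union> B) a0 a1 (x \<union> y)) * \<psi> (x \<union> y))"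
    unfolding inner_q_def product_amp_eq_product_amp_on split by (rule sum_Pow_Un_disjoint[OF disj])
  also have "\<dots> = (\<Sum>x\<in>Pow \<alpha>. \<Sum>y\<in>Pow B.
      cnj (product_amp_on \<alpha> a0 a1 x * product_amp_on B a0 a1 y) * \<psi> (x \<union> y))"
    by (intro sum.cong refl) (simp add: product_amp_on_Un[OF fin disj])
  finally show ?thesis
    by (simp add: B_def)
qed

lemma overlap_pow4_le_purity:
  assumes "normalized n \<psi>" "\<alpha> \<subseteq> {0..<n}"
    and unit: "\<forall>i<n. (cmod (a0 i))\<^sup>2 + (cmod (a1 i))\<^sup>2 = 1"
  shows "(cmod (inner_q n (product_amp n a0 a1) \<psi>))^4 \<le> purity n \<psi> \<alpha>"
proof -
  define t where "t = cmod (inner_q n (product_amp n a0 a1) \<psi>)"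
  define u where "u = product_amp_on \<alpha> a0 a1"
  define E where "E = (\<Sum>x\<in>Pow \<alpha>. \<Sum>x'\<in>Pow \<alpha>. cnj (u x) * u x' * reduced n \<psi> \<alpha> x x')"
  have unit_on: "(\<Sum>X\<in>Pow A. (cmod (product_amp_on A a0 a1 X))\<^sup>2) = 1" if "A \<subseteq> {0..<n}" for A
  proof -
    have "finite A"
      using that finite_subset by blast
    then show ?thesis
      using that unit by (simp add: sum_Pow_cmod_sq_product_amp_on subset_eq)
  qed
  have "t\<^sup>2 \<le> Re E"
    using cmod_sq_partial_overlap_le[where v = "product_amp_on ({0..<n} - \<alpha>) a0 a1" and u = u]
      unit_on[of "{0..<n} - \<alpha>"]
    by (simp add: t_def E_def u_def inner_product_amp_split[OF assms(2)])
  also have "\<dots> \<le> cmod E"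
    by (rule complex_Re_le_cmod)
  finally have "(t\<^sup>2)\<^sup>2 \<le> (cmod E)\<^sup>2"
    by (intro power_mono) auto
  also have "\<dots> \<le> purity n \<psi> \<alpha>"
    using cmod_quadratic_form_sq_le[where u = u and I = "Pow \<alpha>" and M = "reduced n \<psi> \<alpha>"] unit_on[OF assms(2)]
    by (simp add: E_def u_def purity_eq_sum_cmod_sq_reduced[OF assms(1)])
  finally show ?thesis
    by (simp add: t_def)
qed

lemma concentratable_nonneg:
  assumes "normalized n \<psi>"
  shows "0 \<le> concentratable n \<psi>"
proof -
  have "(\<Sum>\<alpha>\<in>Pow {0..<n}. purity n \<psi> \<alpha>) \<le> 2 ^ n"
    using sum_bounded_above[of "Pow {0..<n}" "purity n \<psi>" 1] purity_le_one[OF assms]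
    by (simp add: card_Pow)
  then show ?thesis
    by (simp add: concentratable_def field_simps)
qed

lemma concentratable_le_one_minus_overlap_pow4:
  assumes "normalized n \<psi>" and "\<forall>i<n. (cmod (a0 i))\<^sup>2 + (cmod (a1 i))\<^sup>2 = 1"
  shows "concentratable n \<psi> \<le> 1 - (cmod (inner_q n (product_amp n a0 a1) \<psi>))^4"
proof -
  have "2 ^ n * (cmod (inner_q n (product_amp n a0 a1) \<psi>))^4 \<le> (\<Sum>\<alpha>\<in>Pow {0..<n}. purity n \<psi> \<alpha>)"
    using sum_bounded_below[of "Pow {0..<n}" _ "purity n \<psi>"] overlap_pow4_le_purity[OF assms(1) _ assms(2)]
    by (simp add: card_Pow)
  then show ?thesis
    by (simp add: concentratable_def field_simps)
qed

lemma overlap_sq_le_concentratable: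
  assumes "normalized n \<psi>" and "\<forall>i<n. (cmod (a0 i))\<^sup>2 + (cmod (a1 i))\<^sup>2 = 1"
  shows "(cmod (inner_q n (product_amp n a0 a1) \<psi>))\<^sup>2 \<le> 1 - (concentratable n \<psi>)\<^sup>2 / 2"
proof -
  define t where "t = cmod (inner_q n (product_amp n a0 a1) \<psi>)"
  define C where "C = concentratable n \<psi>"
  have C: "0 \<le> C" "C \<le> 1 - (t\<^sup>2)\<^sup>2"
    using concentratable_nonneg[OF assms(1)] concentratable_le_one_minus_overlap_pow4[OF assms]
    by (simp_all add: C_def t_def)
  have "0 \<le> t"
    by (simp add: t_def)
  then have "t \<le> 1"
    using C power_le_one_iff[of t 4] by simp
  with \<open>0 \<le> t\<close> have "t\<^sup>2 \<le> 1"
    by (simp add: power_le_one)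
  have "C\<^sup>2 \<le> (1 - (t\<^sup>2)\<^sup>2)\<^sup>2"
    using C by (intro power_mono) auto
  also have "\<dots> \<le> 2 * (1 - t\<^sup>2)"
    using \<open>t\<^sup>2 \<le> 1\<close> by (intro one_minus_sq_sq_le) auto
  finally show ?thesis
    by (simp add: t_def C_def)
qed

lemma Lambda_max_bounds:
  assumes "\<And>a0 a1. \<forall>i<n. (cmod (a0 i))\<^sup>2 + (cmod (a1 i))\<^sup>2 = 1
    \<Longrightarrow> cmod (inner_q n (product_amp n a0 a1) \<psi>) \<le> b"
  shows "0 \<le> Lambda_max n \<psi> \<and> Lambda_max n \<psi> \<le> b"
proof -
  define overlaps where "overlaps = {cmod (inner_q n (product_amp n a0 a1) \<psi>) | a0 a1.
      \<forall>i<n. (cmod (a0 i))\<^sup>2 + (cmod (a1 i))\<^sup>2 = 1}"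
  have basis: "cmod (inner_q n (product_amp n (\<lambda>_. 1) (\<lambda>_. 0)) \<psi>) \<in> overlaps"
    unfolding overlaps_def by force
  have bdd: "bdd_above overlaps"
    unfolding bdd_above_def overlaps_def using assms by blast
  have "0 \<le> Sup overlaps"
    using cSup_upper[OF basis bdd] norm_ge_zero order_trans by blast
  moreover have "Sup overlaps \<le> b"
    using basis assms by (intro cSup_least) (auto simp: overlaps_def)
  ultimately show ?thesis
    by (simp add: Lambda_max_def overlaps_def)
qed

theorem mainTheorem15:
  fixes n :: nat and \<psi> :: qstate
  assumes "normalized n \<psi>"
  shows "Lambda_max n \<psi> \<le> sqrt (1 - (concentratable n \<psi>)\<^sup>2 / 2)
    \<and> geom_ent n \<psi> \<ge> (concentratable n \<psi>)\<^sup>2 / 2"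
proof -
  have bounds: "0 \<le> Lambda_max n \<psi> \<and> Lambda_max n \<psi> \<le> sqrt (1 - (concentratable n \<psi>)\<^sup>2 / 2)"
    using overlap_sq_le_concentratable[OF assms] by (intro Lambda_max_bounds real_le_rsqrt)
  then have "(Lambda_max n \<psi>)\<^sup>2 \<le> 1 - (concentratable n \<psi>)\<^sup>2 / 2"
    by (intro sqrt_ge_absD) simp
  with bounds show ?thesis
    by (simp add: geom_ent_def)
qed

end
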